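(* Let $(X,\circ,\bullet)$ be a right-hand skew Boolean algebra. Let $B=X/\gamma$, where $\gamma$ is Green's relation $\mathscr R$ of $(X,\circ)$, with the Boolean algebra structure induced by $\circ$, $\bullet$ and $0$, and let $p\colon X\to B$ be the quotient map. For $x\in X$ and $b\le p(x)$ in $B$ put $x|^{p(x)}_b=y\circ x$ for any $y$ with $p(y)=b$. Then $p\colon X\to B$ is a Boolean set, whose order is the natural partial order of $X$ ($x\le y$ iff $x=x\circ y$).
   Context: A right-hand skew Boolean algebra is $(X,\circ,\bullet)$ where $(X,\circ)$, $(X,\bullet)$ are bands such that: (SB1) $x\circ(x\bullet y)=x=(y\bullet x)\circ x$ and $x\bullet(x\circ y)=x=(y\circ x)\bullet x$; (SB2) $x\circ y\circ x=y\circ x$ and $x\bullet y\bullet x=x\bullet y$; (SB3) $x\bullet y=y\bullet x$ iff $x\circ y=y\circ x$; (SB4) there is $0$ with $0\circ x=0=x\circ 0$; (SB5) each $x^{\downarrow}=\{x\circ s\circ x:s\in X\}$ is a Boolean algebra with top element. Known facts: $(X,\circ)$ is a right normal band; the minimum semilattice congruence $\gamma$ (equal to $\mathscr R$ for $\circ$) is the same for $\circ$ and $\bullet$, and $X/\gamma$ is a Boolean algebra under the induced operations. Convention: a "Boolean algebra" means a generalized Boolean algebra (relatively complemented distributive lattice with $0$). Presheaf of sets over a meet semilattice $E$: pairwise disjoint sets $X_e$, restriction maps $x\mapsto x|^e_f$ for $e\ge f$ with $|^e_e=\mathrm{id}$ and $(x|^e_f)|^f_g=x|^e_g$; global support: all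 $X_e\ne\emptyset$. Order: $x\le y$ iff $p(x)\le p(y)$ and $x=y|^{p(y)}_{p(x)}$. Compatibility $x\sim y$: $x\wedge y$ exists and $p(x\wedge y)=p(x)\wedge p(y)$. A Boolean set is a presheaf with global support over a Boolean algebra with a least element $0$ in $(X,\le)$, joins of all compatible pairs, and $p(x)=0\Rightarrow x=0$. *)

theory Defs
  imports Main
begin

definition partial_order_on' :: "'b set \<Rightarrow> ('b \<Rightarrow> 'b \<Rightarrow> bool) \<Rightarrow> bool" where
  "partial_order_on' A le \<longleftrightarrow>
     (\<forall>a\<in>A. le a a) \<and>
     (\<forall>a\<in>A. \<forall>b\<in>A. le a b \<and> le b a \<longrightarrow> a = b) \<and>
     (\<forall>a\<in>A. \<forall>b\<in>A. \<forall>c\<in>A. le a b \<and> le b c \<longrightarrow> le a c)"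

definition is_inf_in :: "'b set \<Rightarrow> ('b \<Rightarrow> 'b \<Rightarrow> bool) \<Rightarrow> 'b \<Rightarrow> 'b \<Rightarrow> 'b \<Rightarrow> bool" where
  "is_inf_in A le x y m \<longleftrightarrow> m \<in> A \<and> le m x \<and> le m y \<and>
     (\<forall>z\<in>A. le z x \<and> le z y \<longrightarrow> le z m)"

definition is_sup_in :: "'b set \<Rightarrow> ('b \<Rightarrow> 'b \<Rightarrow> bool) \<Rightarrow> 'b \<Rightarrow> 'b \<Rightarrow> 'b \<Rightarrow> bool" where
  "is_sup_in A le x y m \<longleftrightarrow> m \<in> A \<and> le x m \<and> le y m \<and>
     (\<forall>z\<in>A. le x z \<and> le y z \<longrightarrow> le m z)"

definition is_least_in :: "'b set \<Rightarrow> ('b \<Rightarrow> 'b \<Rightarrow> bool) \<Rightarrow> 'b \<Rightarrow> bool" where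
  "is_least_in A le z \<longleftrightarrow> z \<in> A \<and> (\<forall>a\<in>A. le z a)"

definition is_greatest_in :: "'b set \<Rightarrow> ('b \<Rightarrow> 'b \<Rightarrow> bool) \<Rightarrow> 'b \<Rightarrow> bool" where
  "is_greatest_in A le t \<longleftrightarrow> t \<in> A \<and> (\<forall>a\<in>A. le a t)"

definition meet_in :: "'b set \<Rightarrow> ('b \<Rightarrow> 'b \<Rightarrow> bool) \<Rightarrow> 'b \<Rightarrow> 'b \<Rightarrow> 'b" where
  "meet_in A le x y = (THE m. is_inf_in A le x y m)"

definition join_in :: "'b set \<Rightarrow> ('b \<Rightarrow> 'b \<Rightarrow> bool) \<Rightarrow> 'b \<Rightarrow> 'b \<Rightarrow> 'b" where
  "join_in A le x y = (THE m. is_sup_in A le x y m)"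

definition meet_semilattice_on :: "'b set \<Rightarrow> ('b \<Rightarrow> 'b \<Rightarrow> bool) \<Rightarrow> bool" where
  "meet_semilattice_on A le \<longleftrightarrow> partial_order_on' A le \<and>
     (\<forall>x\<in>A. \<forall>y\<in>A. \<exists>m. is_inf_in A le x y m)"

definition gen_boolean_algebra_on :: "'b set \<Rightarrow> ('b \<Rightarrow> 'b \<Rightarrow> bool) \<Rightarrow> bool" where
  "gen_boolean_algebra_on A le \<longleftrightarrow>
     partial_order_on' A le \<and>
     (\<forall>x\<in>A. \<forall>y\<in>A. \<exists>m. is_inf_in A le x y m) \<and>
     (\<forall>x\<in>A. \<forall>y\<in>A. \<exists>m. is_sup_in A le x y m) \<and>
     (\<exists>z. is_least_in A le z) \<and>
     (\<forall>x\<in>A. \<forall>y\<in>A. \<forall>z\<in>A.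
        meet_in A le x (join_in A le y z) = join_in A le (meet_in A le x y) (meet_in A le x z)) \<and>
     (\<forall>a\<in>A. \<forall>b\<in>A. \<forall>c\<in>A. le a c \<and> le c b \<longrightarrow>
        (\<exists>d\<in>A. le a d \<and> le d b \<and> meet_in A le c d = a \<and> join_in A le c d = b))"

text \<open>A presheaf of sets over the meet semilattice \<open>(E, leE)\<close>, given by the total set \<open>X\<close>,
  the projection \<open>p\<close> (so \<open>X_e = {x \<in> X. p x = e}\<close>, automatically pairwise disjoint) and
  restriction \<open>restr x f = x|^{p x}_f\<close> for \<open>f \<le> p x\<close>.\<close>
definition presheaf_on ::
  "'b set \<Rightarrow> ('b \<Rightarrow> 'b \<Rightarrow> bool) \<Rightarrow> 'a set \<Rightarrow> ('a \<Rightarrow> 'b) \<Rightarrow> ('a \<Rightarrow> 'b \<Rightarrow> 'a) \<Rightarrow> bool" where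
  "presheaf_on E leE X p restr \<longleftrightarrow>
     meet_semilattice_on E leE \<and>
     (\<forall>x\<in>X. p x \<in> E) \<and>
     (\<forall>x\<in>X. \<forall>f\<in>E. leE f (p x) \<longrightarrow> restr x f \<in> X \<and> p (restr x f) = f) \<and>
     (\<forall>x\<in>X. restr x (p x) = x) \<and>
     (\<forall>x\<in>X. \<forall>f\<in>E. \<forall>g\<in>E. leE f (p x) \<and> leE g f \<longrightarrow> restr (restr x f) g = restr x g)"

definition global_support :: "'b set \<Rightarrow> 'a set \<Rightarrow> ('a \<Rightarrow> 'b) \<Rightarrow> bool" where
  "global_support E X p \<longleftrightarrow> (\<forall>e\<in>E. \<exists>x\<in>X. p x = e)"

definition presheaf_le ::
  "('b \<Rightarrow> 'b \<Rightarrow> bool) \<Rightarrow> ('a \<Rightarrow> 'b) \<Rightarrow> ('a \<Rightarrow> 'b \<Rightarrow> 'a) \<Rightarrow> 'a \<Rightarrow> 'a \<Rightarrow> bool" where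
  "presheaf_le leE p restr x y \<longleftrightarrow> leE (p x) (p y) \<and> x = restr y (p x)"

definition compatible ::
  "'b set \<Rightarrow> ('b \<Rightarrow> 'b \<Rightarrow> bool) \<Rightarrow> 'a set \<Rightarrow> ('a \<Rightarrow> 'b) \<Rightarrow> ('a \<Rightarrow> 'b \<Rightarrow> 'a) \<Rightarrow> 'a \<Rightarrow> 'a \<Rightarrow> bool" where
  "compatible E leE X p restr x y \<longleftrightarrow>
     (\<exists>m. is_inf_in X (presheaf_le leE p restr) x y m \<and> p m = meet_in E leE (p x) (p y))"

definition boolean_set ::
  "'b set \<Rightarrow> ('b \<Rightarrow> 'b \<Rightarrow> bool) \<Rightarrow> 'a set \<Rightarrow> ('a \<Rightarrow> 'b) \<Rightarrow> ('a \<Rightarrow> 'b \<Rightarrow> 'a) \<Rightarrow> bool" where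
  "boolean_set E leE X p restr \<longleftrightarrow>
     gen_boolean_algebra_on E leE \<and>
     presheaf_on E leE X p restr \<and>
     global_support E X p \<and>
     (\<exists>z. is_least_in X (presheaf_le leE p restr) z \<and>
        (\<forall>x\<in>X. is_least_in E leE (p x) \<longrightarrow> x = z)) \<and>
     (\<forall>x\<in>X. \<forall>y\<in>X. compatible E leE X p restr x y \<longrightarrow>
        (\<exists>j. is_sup_in X (presheaf_le leE p restr) x y j))"

definition band :: "('a \<Rightarrow> 'a \<Rightarrow> 'a) \<Rightarrow> bool" where
  "band f \<longleftrightarrow> (\<forall>x y z. f (f x y) z = f x (f y z)) \<and> (\<forall>x. f x x = x)"

definition nat_le :: "('a \<Rightarrow> 'a \<Rightarrow> 'a) \<Rightarrow> 'a \<Rightarrow> 'a \<Rightarrow> bool" where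
  "nat_le circ x y \<longleftrightarrow> x = circ x y"

definition down_set :: "('a \<Rightarrow> 'a \<Rightarrow> 'a) \<Rightarrow> 'a \<Rightarrow> 'a set" where
  "down_set circ x = {circ (circ x s) x | s. True}"

definition right_skew_boolean_algebra ::
  "('a \<Rightarrow> 'a \<Rightarrow> 'a) \<Rightarrow> ('a \<Rightarrow> 'a \<Rightarrow> 'a) \<Rightarrow> 'a \<Rightarrow> bool" where
  "right_skew_boolean_algebra circ bul zero \<longleftrightarrow>
     band circ \<and> band bul \<and>
     (\<forall>x y. circ x (bul x y) = x \<and> circ (bul y x) x = x) \<and>
     (\<forall>x y. bul x (circ x y) = x \<and> bul (circ y x) x = x) \<and>
     (\<forall>x y. circ (circ x y) x = circ y x) \<and>
     (\<forall>x y. bul (bul x y) x = bul x y) \<and>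
     (\<forall>x y. bul x y = bul y x \<longleftrightarrow> circ x y = circ y x) \<and>
     (\<forall>x. circ zero x = zero \<and> circ x zero = zero) \<and>
     (\<forall>x. let D = down_set circ x in
        gen_boolean_algebra_on D (nat_le circ) \<and>
        (\<exists>t. is_greatest_in D (nat_le circ) t) \<and>
        (\<forall>a\<in>D. \<forall>b\<in>D. is_inf_in D (nat_le circ) a b (circ a b) \<and>
                        is_sup_in D (nat_le circ) a b (bul a b)))"

text \<open>Green's relation \<open>\<R>\<close> of the band \<open>(X,\<circ>)\<close>: \<open>x X^1 = y X^1\<close>.\<close>
definition green_R :: "('a \<Rightarrow> 'a \<Rightarrow> 'a) \<Rightarrow> 'a \<Rightarrow> 'a \<Rightarrow> bool" where
  "green_R circ x y \<longleftrightarrow> (x = y \<or> (\<exists>s. x = circ y s)) \<and> (y = x \<or> (\<exists>t. y = circ x t))"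

definition gclass :: "('a \<Rightarrow> 'a \<Rightarrow> 'a) \<Rightarrow> 'a \<Rightarrow> 'a set" where
  "gclass circ x = {y. green_R circ x y}"

definition quotB :: "('a \<Rightarrow> 'a \<Rightarrow> 'a) \<Rightarrow> 'a set set" where
  "quotB circ = range (gclass circ)"

definition quot_le :: "('a \<Rightarrow> 'a \<Rightarrow> 'a) \<Rightarrow> 'a set \<Rightarrow> 'a set \<Rightarrow> bool" where
  "quot_le circ P Q \<longleftrightarrow>
     (\<exists>x y. P = gclass circ x \<and> Q = gclass circ y \<and> gclass circ (circ x y) = gclass circ x)"

definition quot_restr :: "('a \<Rightarrow> 'a \<Rightarrow> 'a) \<Rightarrow> 'a \<Rightarrow> 'a set \<Rightarrow> 'a" where
  "quot_restr circ x b = circ (SOME y. gclass circ y = b) x"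

end

theory Submission
  imports Defs
begin

text \<open>Every down-set \<open>w\<^sup>\<down>\<close> of \<open>(X,\<odot>)\<close> is a Boolean algebra in which \<open>\<odot>\<close> is the meet,
  so \<open>\<odot>\<close> commutes on \<open>w\<^sup>\<down>\<close>; applied to \<open>x \<odot> w\<close> and \<open>y \<odot> w\<close> this gives right normality
  \<open>x \<odot> y \<odot> w = y \<odot> x \<odot> w\<close>. Hence \<open>y \<odot> x\<close> depends only on the class of \<open>y\<close>, which makes
  the restriction well defined, and \<open>\<gamma>\<close> is a congruence for \<open>\<odot>\<close> and \<open>\<bullet>\<close>. The class map is
  injective on \<open>w\<^sup>\<down>\<close> and hits every class below \<open>[w]\<close>, so the lattice laws of \<open>X/\<gamma>\<close> are
  inherited from the Boolean algebra \<open>w\<^sup>\<down>\<close> for a common upper bound \<open>w\<close>. Finally, compatible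
  elements commute, and commuting elements have \<open>x \<bullet> y\<close> as their join.\<close>

lemma meet_in_eqI:
  assumes "partial_order_on' A le" "is_inf_in A le x y m"
  shows "meet_in A le x y = m"
  unfolding meet_in_def
proof (rule the_equality)
  show "is_inf_in A le x y m" by fact
  fix m' assume "is_inf_in A le x y m'"
  with assms show "m' = m" unfolding is_inf_in_def partial_order_on'_def by metis
qed

lemma join_in_eqI:
  assumes "partial_order_on' A le" "is_sup_in A le x y m"
  shows "join_in A le x y = m"
  unfolding join_in_def
proof (rule the_equality)
  show "is_sup_in A le x y m" by fact
  fix m' assume "is_sup_in A le x y m'"
  with assms show "m' = m" unfolding is_sup_in_def partial_order_on'_def by metis
qed

lemma is_inf_in_commute:
  assumes "partial_order_on' A le" "is_inf_in A le x y m" "is_inf_in A le y x m'"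
  shows "m = m'"
  using assms unfolding is_inf_in_def partial_order_on'_def by metis

lemma gclass_in_quotB [simp]: "gclass circ x \<in> quotB circ"
  unfolding quotB_def by simp

lemma ball_quotB: "(\<forall>P\<in>quotB circ. Q P) \<longleftrightarrow> (\<forall>x. Q (gclass circ x))"
  and bex_quotB: "(\<exists>P\<in>quotB circ. Q P) \<longleftrightarrow> (\<exists>x. Q (gclass circ x))"
  unfolding quotB_def by simp_all

locale rsba =
  fixes circ :: "'a \<Rightarrow> 'a \<Rightarrow> 'a" (infixl "\<odot>" 70)
    and bul :: "'a \<Rightarrow> 'a \<Rightarrow> 'a" (infixl "\<bullet>" 65)
    and zero :: 'a
  assumes rsba: "right_skew_boolean_algebra circ bul zero"
begin

lemma circ_assoc: "x \<odot> y \<odot> w = x \<odot> (y \<odot> w)"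
  and circ_idem [simp]: "x \<odot> x = x"
  and bul_assoc: "x \<bullet> y \<bullet> w = x \<bullet> (y \<bullet> w)"
  and bul_idem: "x \<bullet> x = x"
  using rsba unfolding right_skew_boolean_algebra_def band_def by blast+

lemma circ_bul_absorb1: "x \<odot> (x \<bullet> y) = x"
  and circ_bul_absorb2: "(y \<bullet> x) \<odot> x = x"
  and bul_circ_absorb1: "x \<bullet> (x \<odot> y) = x"
  and bul_left_regular: "x \<bullet> y \<bullet> x = x \<bullet> y"
  and bul_commute_iff_circ_commute: "x \<bullet> y = y \<bullet> x \<longleftrightarrow> x \<odot> y = y \<odot> x"
  and zero_circ: "zero \<odot> x = zero"
  and circ_zero: "x \<odot> zero = zero"
  using rsba unfolding right_skew_boolean_algebra_def by blast+

lemma circ_right_regular [simp]: "x \<odot> (y \<odot> x) = y \<odot> x"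
  using rsba circ_assoc unfolding right_skew_boolean_algebra_def by metis

lemma circ_left_idem [simp]: "x \<odot> (x \<odot> y) = x \<odot> y"
  by (simp add: circ_assoc[symmetric])

lemma mem_down_set_iff: "a \<in> down_set circ w \<longleftrightarrow> a \<odot> w = a"
proof
  assume "a \<in> down_set circ w"
  then show "a \<odot> w = a" unfolding down_set_def by (auto simp: circ_assoc)
next
  assume "a \<odot> w = a"
  then have "a = w \<odot> a \<odot> w" by (metis circ_assoc circ_right_regular)
  then show "a \<in> down_set circ w" unfolding down_set_def by blast
qed

lemma boolean_algebra_down_set: "gen_boolean_algebra_on (down_set circ w) (nat_le circ)"
  using rsba unfolding right_skew_boolean_algebra_def Let_def by blast

lemma is_inf_in_down_set:
  assumes "a \<odot> w = a" "d \<odot> w = d"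
  shows "is_inf_in (down_set circ w) (nat_le circ) a d (a \<odot> d)"
proof -
  have "a \<in> down_set circ w" "d \<in> down_set circ w" using assms mem_down_set_iff by auto
  with rsba show ?thesis unfolding right_skew_boolean_algebra_def Let_def by blast
qed

lemma is_sup_in_down_set:
  assumes "a \<odot> w = a" "d \<odot> w = d"
  shows "is_sup_in (down_set circ w) (nat_le circ) a d (a \<bullet> d)"
proof -
  have "a \<in> down_set circ w" "d \<in> down_set circ w" using assms mem_down_set_iff by auto
  with rsba show ?thesis unfolding right_skew_boolean_algebra_def Let_def by blast
qed

lemma partial_order_down_set: "partial_order_on' (down_set circ w) (nat_le circ)"
  using boolean_algebra_down_set unfolding gen_boolean_algebra_on_def by blast

lemma meet_in_down_set: "a \<odot> w = a \<Longrightarrow> d \<odot> w = d \<Longrightarrow> meet_in (down_set circ w) (nat_le circ) a d = a \<odot> d"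
  by (rule meet_in_eqI[OF partial_order_down_set is_inf_in_down_set])

lemma join_in_down_set: "a \<odot> w = a \<Longrightarrow> d \<odot> w = d \<Longrightarrow> join_in (down_set circ w) (nat_le circ) a d = a \<bullet> d"
  by (rule join_in_eqI[OF partial_order_down_set is_sup_in_down_set])

lemma bul_in_down_set: "a \<odot> w = a \<Longrightarrow> d \<odot> w = d \<Longrightarrow> (a \<bullet> d) \<odot> w = a \<bullet> d"
  using is_sup_in_down_set[of a w d] mem_down_set_iff unfolding is_sup_in_def by blast

lemma circ_commute_in_down_set: "a \<odot> w = a \<Longrightarrow> d \<odot> w = d \<Longrightarrow> a \<odot> d = d \<odot> a"
  by (rule is_inf_in_commute[OF partial_order_down_set is_inf_in_down_set is_inf_in_down_set])

lemma circ_right_normal: "x \<odot> (y \<odot> w) = y \<odot> (x \<odot> w)"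
proof -
  have "x \<odot> w \<odot> (y \<odot> w) = y \<odot> w \<odot> (x \<odot> w)"
    by (rule circ_commute_in_down_set[where w = w]) (simp_all add: circ_assoc)
  then show ?thesis by (simp add: circ_assoc)
qed

lemma down_set_distrib:
  assumes "a \<odot> w = a" "d \<odot> w = d" "e \<odot> w = e"
  shows "a \<odot> (d \<bullet> e) = a \<odot> d \<bullet> a \<odot> e"
proof -
  have "a \<in> down_set circ w" "d \<in> down_set circ w" "e \<in> down_set circ w"
    using assms mem_down_set_iff by auto
  then have "meet_in (down_set circ w) (nat_le circ) a (join_in (down_set circ w) (nat_le circ) d e) =
        join_in (down_set circ w) (nat_le circ)
          (meet_in (down_set circ w) (nat_le circ) a d) (meet_in (down_set circ w) (nat_le circ) a e)"
    using boolean_algebra_down_set unfolding gen_boolean_algebra_on_def by blast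
  then show ?thesis
    using assms by (simp add: meet_in_down_set join_in_down_set bul_in_down_set circ_assoc)
qed

lemma down_set_relative_compl:
  assumes "a \<odot> w = a" "d \<odot> w = d" "e \<odot> w = e" "nat_le circ a e" "nat_le circ e d"
  obtains f where "f \<odot> w = f" "nat_le circ a f" "nat_le circ f d" "e \<odot> f = a" "e \<bullet> f = d"
proof -
  have "a \<in> down_set circ w" "d \<in> down_set circ w" "e \<in> down_set circ w"
    using assms mem_down_set_iff by auto
  then obtain f where f: "f \<in> down_set circ w" "nat_le circ a f" "nat_le circ f d"
     "meet_in (down_set circ w) (nat_le circ) e f = a" "join_in (down_set circ w) (nat_le circ) e f = d"
    using boolean_algebra_down_set assms unfolding gen_boolean_algebra_on_def by blast
  then have "f \<odot> w = f" by (simp add: mem_down_set_iff)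
  with f assms that show thesis by (simp add: meet_in_down_set join_in_down_set)
qed

text \<open>An equation \<open>y \<odot> x = x\<close> says \<open>x \<le>\<^sub>\<R> y\<close>, i.e.\ \<open>[x] \<le> [y]\<close> in \<open>X/\<gamma>\<close>
  (lemma \<open>quot_le_gclass_iff\<close>); it is the form in which the order of the quotient is used below.\<close>

lemma green_R_iff: "green_R circ x y \<longleftrightarrow> y \<odot> x = x \<and> x \<odot> y = y"
  unfolding green_R_def by (metis circ_idem circ_left_idem)

lemma R_le_trans: "y \<odot> x = x \<Longrightarrow> u \<odot> y = y \<Longrightarrow> u \<odot> x = x"
  by (metis circ_assoc)

lemma gclass_eq_iff: "gclass circ x = gclass circ y \<longleftrightarrow> y \<odot> x = x \<and> x \<odot> y = y"
  unfolding gclass_def green_R_iff set_eq_iff mem_Collect_eq by (metis R_le_trans circ_idem)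

lemma circ_eq_if_gclass_eq:
  assumes "gclass circ x = gclass circ y"
  shows "x \<odot> w = y \<odot> w"
proof -
  have "y \<odot> x = x" "x \<odot> y = y" using assms gclass_eq_iff by auto
  then have "x \<odot> w = y \<odot> (x \<odot> w)" by (simp add: circ_assoc[symmetric])
  also have "\<dots> = x \<odot> (y \<odot> w)" by (rule circ_right_normal)
  also have "\<dots> = y \<odot> w" using \<open>x \<odot> y = y\<close> by (simp add: circ_assoc[symmetric])
  finally show ?thesis .
qed

lemma gclass_circ_right: "w \<odot> x = x \<Longrightarrow> gclass circ (x \<odot> w) = gclass circ x"
  unfolding gclass_eq_iff by (metis circ_assoc circ_idem circ_left_idem)

lemma quot_le_gclass_iff: "quot_le circ (gclass circ x) (gclass circ y) \<longleftrightarrow> y \<odot> x = x"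
proof
  assume "quot_le circ (gclass circ x) (gclass circ y)"
  then obtain x' y' where xx': "gclass circ x = gclass circ x'" and yy': "gclass circ y = gclass circ y'"
    and "gclass circ (x' \<odot> y') = gclass circ x'" unfolding quot_le_def by blast
  then have "x' \<odot> y' \<odot> x' = x'" unfolding gclass_eq_iff by blast
  then have "y' \<odot> x' = x'" by (simp add: circ_assoc)
  moreover have "x' \<odot> x = x" "y \<odot> y' = y'" using xx' yy' gclass_eq_iff by auto
  ultimately show "y \<odot> x = x" by (metis R_le_trans)
next
  assume "y \<odot> x = x"
  then show "quot_le circ (gclass circ x) (gclass circ y)"
    unfolding quot_le_def using gclass_circ_right by blast
qed

lemma gclass_eq_iff_bul: "gclass circ x = gclass circ y \<longleftrightarrow> x \<bullet> y = x \<and> y \<bullet> x = y"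
  unfolding gclass_eq_iff by (metis bul_circ_absorb1 circ_bul_absorb2)

lemma circ_R_mono: "d' \<odot> d = d \<Longrightarrow> a \<odot> d' \<odot> (a \<odot> d) = a \<odot> d"
  by (metis circ_assoc circ_left_idem circ_right_normal)

lemma gclass_circ_cong:
  assumes "gclass circ a = gclass circ a'" "gclass circ d = gclass circ d'"
  shows "gclass circ (a \<odot> d) = gclass circ (a' \<odot> d')"
proof -
  have "a \<odot> d = a' \<odot> d" using assms(1) by (rule circ_eq_if_gclass_eq)
  moreover have "gclass circ (a' \<odot> d) = gclass circ (a' \<odot> d')"
    using assms(2) unfolding gclass_eq_iff by (metis circ_R_mono)
  ultimately show ?thesis by simp
qed

lemma bul_L_compat_left: "d \<bullet> d' = d \<Longrightarrow> a \<bullet> d \<bullet> (a \<bullet> d') = a \<bullet> d"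
  by (metis bul_assoc bul_left_regular)

lemma bul_L_compat_right: "a \<bullet> a' = a \<Longrightarrow> a \<bullet> d \<bullet> (a' \<bullet> d) = a \<bullet> d"
  by (metis bul_assoc bul_idem)

lemma gclass_bul_cong:
  assumes "gclass circ a = gclass circ a'" "gclass circ d = gclass circ d'"
  shows "gclass circ (a \<bullet> d) = gclass circ (a' \<bullet> d')"
proof -
  have "gclass circ (a \<bullet> d) = gclass circ (a \<bullet> d')"
    using assms(2) unfolding gclass_eq_iff_bul by (metis bul_L_compat_left)
  also have "\<dots> = gclass circ (a' \<bullet> d')"
    using assms(1) unfolding gclass_eq_iff_bul by (metis bul_L_compat_right)
  finally show ?thesis .
qed

lemma down_set_gclass_inj:
  assumes "a \<odot> w = a" "d \<odot> w = d" "gclass circ a = gclass circ d"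
  shows "a = d"
  using assms circ_commute_in_down_set gclass_eq_iff by metis

lemma bul_R_upper1: "(x \<bullet> y) \<odot> x = x"
  using circ_bul_absorb2[where y = "x \<bullet> y" and x = x] by (simp add: bul_left_regular)

lemma bul_R_least:
  assumes "u \<odot> x = x" "u \<odot> y = y"
  shows "u \<odot> (x \<bullet> y) = x \<bullet> y"
proof -
  have "(x \<odot> u \<bullet> y \<odot> u) \<odot> u = x \<odot> u \<bullet> y \<odot> u"
    by (rule bul_in_down_set) (simp_all add: circ_assoc)
  then have "quot_le circ (gclass circ (x \<odot> u \<bullet> y \<odot> u)) (gclass circ u)"
    unfolding quot_le_gclass_iff by (metis circ_right_regular)
  moreover have "gclass circ (x \<odot> u \<bullet> y \<odot> u) = gclass circ (x \<bullet> y)"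
    by (rule gclass_bul_cong[OF gclass_circ_right gclass_circ_right]) (fact assms)+
  ultimately show ?thesis by (simp add: quot_le_gclass_iff)
qed

lemma partial_order_quotB: "partial_order_on' (quotB circ) (quot_le circ)"
  unfolding partial_order_on'_def ball_quotB
  by (simp add: quot_le_gclass_iff gclass_eq_iff) (metis R_le_trans)

lemma is_inf_quotB: "is_inf_in (quotB circ) (quot_le circ) (gclass circ x) (gclass circ y) (gclass circ (x \<odot> y))"
  unfolding is_inf_in_def ball_quotB by (auto simp: quot_le_gclass_iff circ_assoc)

lemma is_sup_quotB: "is_sup_in (quotB circ) (quot_le circ) (gclass circ x) (gclass circ y) (gclass circ (x \<bullet> y))"
  unfolding is_sup_in_def ball_quotB
  by (auto simp: quot_le_gclass_iff bul_R_upper1 circ_bul_absorb2 bul_R_least)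

lemma meet_quotB: "meet_in (quotB circ) (quot_le circ) (gclass circ x) (gclass circ y) = gclass circ (x \<odot> y)"
  by (rule meet_in_eqI[OF partial_order_quotB is_inf_quotB])

lemma join_quotB: "join_in (quotB circ) (quot_le circ) (gclass circ x) (gclass circ y) = gclass circ (x \<bullet> y)"
  by (rule join_in_eqI[OF partial_order_quotB is_sup_quotB])

lemma gclass_distrib: "gclass circ (x \<odot> (y \<bullet> u)) = gclass circ (x \<odot> y \<bullet> x \<odot> u)"
proof -
  define w where "w = x \<bullet> y \<bullet> u"
  have "w \<odot> x = x" "w \<odot> y = y" "w \<odot> u = u"
    unfolding w_def by (metis R_le_trans bul_R_upper1 circ_bul_absorb2)+
  then have x: "gclass circ (x \<odot> w) = gclass circ x" and y: "gclass circ (y \<odot> w) = gclass circ y"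
    and u: "gclass circ (u \<odot> w) = gclass circ u" by (simp_all add: gclass_circ_right)
  have "gclass circ (x \<odot> (y \<bullet> u)) = gclass circ (x \<odot> w \<odot> (y \<odot> w \<bullet> u \<odot> w))"
    by (rule gclass_circ_cong[OF x[symmetric] gclass_bul_cong[OF y[symmetric] u[symmetric]]])
  also have "\<dots> = gclass circ (x \<odot> w \<odot> (y \<odot> w) \<bullet> x \<odot> w \<odot> (u \<odot> w))"
    by (subst down_set_distrib[where w = w]) (simp_all add: circ_assoc)
  also have "\<dots> = gclass circ (x \<odot> y \<bullet> x \<odot> u)"
    by (rule gclass_bul_cong[OF gclass_circ_cong[OF x y] gclass_circ_cong[OF x u]])
  finally show ?thesis .
qed

lemma gclass_relative_compl:
  assumes "e \<odot> a = a" "d \<odot> e = e"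
  obtains f where "f \<odot> a = a" "d \<odot> f = f"
    "gclass circ (e \<odot> f) = gclass circ a" "gclass circ (e \<bullet> f) = gclass circ d"
proof -
  define a' where "a' = a \<odot> d"
  define e' where "e' = e \<odot> d"
  have "d \<odot> a = a" using assms by (rule R_le_trans)
  then have a': "gclass circ a' = gclass circ a" unfolding a'_def by (rule gclass_circ_right)
  have e': "gclass circ e' = gclass circ e" unfolding e'_def using assms(2) by (rule gclass_circ_right)
  have a'd: "a' \<odot> d = a'" and e'd: "e' \<odot> d = e'" unfolding a'_def e'_def by (simp_all add: circ_assoc)
  have "a' \<odot> e' = e \<odot> a'" unfolding a'_def e'_def by (metis circ_assoc circ_right_normal circ_right_regular)
  also have "\<dots> = a'" unfolding a'_def using assms(1) by (simp add: circ_assoc[symmetric])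
  finally have "nat_le circ a' e'" unfolding nat_le_def by simp
  moreover have "nat_le circ e' d" unfolding nat_le_def using e'd by simp
  ultimately obtain f where f: "f \<odot> d = f" "nat_le circ a' f" "e' \<odot> f = a'" "e' \<bullet> f = d"
    using down_set_relative_compl[OF a'd circ_idem e'd] by metis
  have "f \<odot> a' = a'" using f(2) circ_commute_in_down_set[OF a'd f(1)] unfolding nat_le_def by simp
  then have "f \<odot> a = a" using a' quot_le_gclass_iff by metis
  moreover have "d \<odot> f = f" using circ_commute_in_down_set[OF f(1) circ_idem] f(1) by simp
  moreover have "gclass circ (e \<odot> f) = gclass circ a" using gclass_circ_cong[OF e'[symmetric]] f(3) a' by simp
  moreover have "gclass circ (e \<bullet> f) = gclass circ d" using gclass_bul_cong[OF e'[symmetric]] f(4) by simp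
  ultimately show thesis by (rule that)
qed

lemma boolean_algebra_quotB: "gen_boolean_algebra_on (quotB circ) (quot_le circ)"
  unfolding gen_boolean_algebra_on_def
proof (intro conjI)
  show "partial_order_on' (quotB circ) (quot_le circ)" by (rule partial_order_quotB)
  show "\<forall>P\<in>quotB circ. \<forall>Q\<in>quotB circ. \<exists>M. is_inf_in (quotB circ) (quot_le circ) P Q M"
    unfolding ball_quotB using is_inf_quotB by blast
  show "\<forall>P\<in>quotB circ. \<forall>Q\<in>quotB circ. \<exists>M. is_sup_in (quotB circ) (quot_le circ) P Q M"
    unfolding ball_quotB using is_sup_quotB by blast
  have "is_least_in (quotB circ) (quot_le circ) (gclass circ zero)"
    unfolding is_least_in_def ball_quotB by (simp add: quot_le_gclass_iff circ_zero)
  then show "\<exists>M. is_least_in (quotB circ) (quot_le circ) M" by blast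
  show "\<forall>P\<in>quotB circ. \<forall>Q\<in>quotB circ. \<forall>R\<in>quotB circ.
       meet_in (quotB circ) (quot_le circ) P (join_in (quotB circ) (quot_le circ) Q R) =
       join_in (quotB circ) (quot_le circ)
         (meet_in (quotB circ) (quot_le circ) P Q) (meet_in (quotB circ) (quot_le circ) P R)"
    unfolding ball_quotB by (simp add: meet_quotB join_quotB gclass_distrib)
  show "\<forall>P\<in>quotB circ. \<forall>Q\<in>quotB circ. \<forall>R\<in>quotB circ. quot_le circ P R \<and> quot_le circ R Q \<longrightarrow>
       (\<exists>S\<in>quotB circ. quot_le circ P S \<and> quot_le circ S Q \<and>
          meet_in (quotB circ) (quot_le circ) R S = P \<and> join_in (quotB circ) (quot_le circ) R S = Q)"
    unfolding ball_quotB bex_quotB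
    by (simp add: quot_le_gclass_iff meet_quotB join_quotB) (metis gclass_relative_compl)
qed

lemma circ_R_le_absorb: "y \<odot> u = u \<Longrightarrow> u \<odot> (y \<odot> x) = u \<odot> x"
  by (metis circ_assoc circ_right_normal)

lemma quot_restr_gclass: "quot_restr circ y (gclass circ x) = x \<odot> y"
proof -
  have "gclass circ (SOME u. gclass circ u = gclass circ x) = gclass circ x" by (rule someI) (rule refl)
  then show ?thesis unfolding quot_restr_def by (rule circ_eq_if_gclass_eq)
qed

lemma presheaf_le_eq_nat_le: "presheaf_le (quot_le circ) (gclass circ) (quot_restr circ) = nat_le circ"
  unfolding presheaf_le_def nat_le_def quot_le_gclass_iff quot_restr_gclass
  by (metis circ_right_regular)

lemma presheaf_quotB: "presheaf_on (quotB circ) (quot_le circ) UNIV (gclass circ) (quot_restr circ)"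
  unfolding presheaf_on_def ball_quotB
proof (intro conjI)
  show "meet_semilattice_on (quotB circ) (quot_le circ)"
    unfolding meet_semilattice_on_def ball_quotB using partial_order_quotB is_inf_quotB by blast
  show "\<forall>x\<in>UNIV. gclass circ x \<in> quotB circ" by simp
  show "\<forall>x\<in>UNIV. \<forall>y. quot_le circ (gclass circ y) (gclass circ x) \<longrightarrow>
      quot_restr circ x (gclass circ y) \<in> UNIV \<and> gclass circ (quot_restr circ x (gclass circ y)) = gclass circ y"
    by (simp add: quot_le_gclass_iff quot_restr_gclass gclass_circ_right)
  show "\<forall>x\<in>UNIV. quot_restr circ x (gclass circ x) = x" by (simp add: quot_restr_gclass)
  show "\<forall>x\<in>UNIV. \<forall>y u. quot_le circ (gclass circ y) (gclass circ x) \<and> quot_le circ (gclass circ u) (gclass circ y)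
      \<longrightarrow> quot_restr circ (quot_restr circ x (gclass circ y)) (gclass circ u) = quot_restr circ x (gclass circ u)"
    by (simp add: quot_le_gclass_iff quot_restr_gclass circ_R_le_absorb)
qed

lemma least_nat_le_zero: "is_least_in UNIV (nat_le circ) zero"
  unfolding is_least_in_def nat_le_def by (simp add: zero_circ)

lemma eq_zero_if_gclass_least:
  assumes "is_least_in (quotB circ) (quot_le circ) (gclass circ x)"
  shows "x = zero"
proof -
  have "zero \<odot> x = x" using assms unfolding is_least_in_def ball_quotB quot_le_gclass_iff by blast
  then show ?thesis by (simp add: zero_circ)
qed

text \<open>The infimum \<open>m\<close> and \<open>x \<odot> y\<close> both lie in \<open>down_set circ y\<close> and in the same class, so
  they coincide; symmetrically \<open>m = y \<odot> x\<close>.\<close>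

lemma circ_commute_if_compatible:
  assumes "compatible (quotB circ) (quot_le circ) UNIV (gclass circ) (quot_restr circ) x y"
  shows "x \<odot> y = y \<odot> x"
proof -
  obtain m where m: "is_inf_in UNIV (nat_le circ) x y m" "gclass circ m = gclass circ (x \<odot> y)"
    using assms unfolding compatible_def presheaf_le_eq_nat_le meet_quotB by blast
  have mx: "m \<odot> x = m" and my: "m \<odot> y = m" using m(1) unfolding is_inf_in_def nat_le_def by auto
  have "gclass circ (x \<odot> y) = gclass circ (y \<odot> x)"
    unfolding gclass_eq_iff by (metis circ_assoc circ_left_idem circ_right_regular)
  then have "m = y \<odot> x" using down_set_gclass_inj[OF mx] m(2) by (simp add: circ_assoc)
  moreover have "m = x \<odot> y" using down_set_gclass_inj[OF my] m(2) by (simp add: circ_assoc)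
  ultimately show ?thesis by simp
qed

lemma is_sup_nat_le_bul:
  assumes "x \<odot> y = y \<odot> x"
  shows "is_sup_in UNIV (nat_le circ) x y (x \<bullet> y)"
  unfolding is_sup_in_def nat_le_def
proof (intro conjI ballI impI)
  have "x \<bullet> y = y \<bullet> x" using assms bul_commute_iff_circ_commute by blast
  then show "x = x \<odot> (x \<bullet> y)" "y = y \<odot> (x \<bullet> y)" by (metis circ_bul_absorb1)+
  fix u assume "x = x \<odot> u \<and> y = y \<odot> u"
  then show "x \<bullet> y = (x \<bullet> y) \<odot> u" using bul_in_down_set[of x u y] by simp
qed simp

lemma boolean_set_quotB: "boolean_set (quotB circ) (quot_le circ) UNIV (gclass circ) (quot_restr circ)"
  unfolding boolean_set_def presheaf_le_eq_nat_le
proof (intro conjI)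
  show "gen_boolean_algebra_on (quotB circ) (quot_le circ)" by (rule boolean_algebra_quotB)
  show "presheaf_on (quotB circ) (quot_le circ) UNIV (gclass circ) (quot_restr circ)" by (rule presheaf_quotB)
  show "global_support (quotB circ) UNIV (gclass circ)" unfolding global_support_def ball_quotB by blast
  show "\<exists>z. is_least_in UNIV (nat_le circ) z \<and>
      (\<forall>x\<in>UNIV. is_least_in (quotB circ) (quot_le circ) (gclass circ x) \<longrightarrow> x = z)"
    using least_nat_le_zero eq_zero_if_gclass_least by blast
  show "\<forall>x\<in>UNIV. \<forall>y\<in>UNIV. compatible (quotB circ) (quot_le circ) UNIV (gclass circ) (quot_restr circ) x y \<longrightarrow>
      (\<exists>j. is_sup_in UNIV (nat_le circ) x y j)"
    using circ_commute_if_compatible is_sup_nat_le_bul by blast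
qed

end

theorem proposition2p6:
  fixes circ bul :: "'a \<Rightarrow> 'a \<Rightarrow> 'a" and zero :: 'a
  assumes "right_skew_boolean_algebra circ bul zero"
  shows "(\<forall>x y y'. quot_le circ (gclass circ y) (gclass circ x) \<and>
            gclass circ y = gclass circ y' \<longrightarrow> circ y x = circ y' x)
       \<and> boolean_set (quotB circ) (quot_le circ) UNIV (gclass circ) (quot_restr circ)
       \<and> (\<forall>x y. presheaf_le (quot_le circ) (gclass circ) (quot_restr circ) x y
                  \<longleftrightarrow> nat_le circ x y)"
proof -
  interpret rsba circ bul zero by (rule rsba.intro) (fact assms)
  show ?thesis
    unfolding presheaf_le_eq_nat_le using circ_eq_if_gclass_eq boolean_set_quotB by blast
qed

end
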